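(* Let $m\in\mathbb N$ and $j\in\{1,2\}$. Then $r(T_m',T_{m+1}^j)=2m-4$ if $m$ is odd and $m\ge 9$, and $r(T_m',T_{m+1}^j)=2m-5$ if $m$ is even and $m\ge 16$. Moreover, if $n\in\mathbb N$, $m\ge 7$, $n\ge\max\{m+2,\,19-m\}$ and $m-1\nmid (n-4)$, then $r(T_m',T_n^j)=m+n-5$.
   Context: All graphs are finite and simple; a graph "contains" $H$ if it has a subgraph isomorphic to $H$. For graphs $G_1,G_2$, the Ramsey number $r(G_1,G_2)$ is the smallest positive integer $N$ such that for every graph $G$ on $N$ vertices, either $G$ contains a copy of $G_1$ or the complement $\overline G$ contains a copy of $G_2$. For $n\ge 5$, $T_n^1$ is the tree with vertex set $\{v_0,\ldots,v_{n-1}\}$ and edges $v_0v_1,\ldots,v_0v_{n-3},v_{n-4}v_{n-2},v_{n-3}v_{n-1}$, and $T_n^2$ is the tree on the same vertex set with edges $v_0v_1,\ldots,v_0v_{n-3},v_{n-3}v_{n-2},v_{n-3}v_{n-1}$. For $m\ge 4$, $T_m'$ is the unique (up to isomorphism) tree on $m$ vertices with maximum degree $m-2$. *)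

theory Defs
  imports Main
begin

type_synonym graph = "nat set \<times> nat set set"

definition all_pairs :: "nat set \<Rightarrow> nat set set" where
  "all_pairs V = {{u, v} | u v. u \<in> V \<and> v \<in> V \<and> u \<noteq> v}"

definition simple_graph :: "graph \<Rightarrow> bool" where
  "simple_graph G \<longleftrightarrow> finite (fst G) \<and> snd G \<subseteq> all_pairs (fst G)"

definition complement :: "graph \<Rightarrow> graph" where
  "complement G = (fst G, all_pairs (fst G) - snd G)"

definition contains :: "graph \<Rightarrow> graph \<Rightarrow> bool" where
  "contains G H \<longleftrightarrow> (\<exists>f. inj_on f (fst H) \<and> f ` fst H \<subseteq> fst G \<and>
                         (\<forall>e \<in> snd H. f ` e \<in> snd G))"

text \<open>Ramsey number: the least positive N such that every graph on N vertices
(w.l.o.g. on vertex set {0..<N}) contains G1 or its complement contains G2.\<close>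
definition ramsey :: "graph \<Rightarrow> graph \<Rightarrow> nat" where
  "ramsey G1 G2 = (LEAST N. N > 0 \<and>
     (\<forall>E. simple_graph ({0..<N}, E) \<longrightarrow>
          contains ({0..<N}, E) G1 \<or> contains (complement ({0..<N}, E)) G2))"

definition T1 :: "nat \<Rightarrow> graph" where
  "T1 n = ({0..<n}, {{0, i} | i. 1 \<le> i \<and> i \<le> n - 3} \<union> {{n - 4, n - 2}, {n - 3, n - 1}})"

definition T2 :: "nat \<Rightarrow> graph" where
  "T2 n = ({0..<n}, {{0, i} | i. 1 \<le> i \<and> i \<le> n - 3} \<union> {{n - 3, n - 2}, {n - 3, n - 1}})"

definition Tj :: "nat \<Rightarrow> nat \<Rightarrow> graph" where
  "Tj j n = (if j = 1 then T1 n else T2 n)"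

text \<open>T_m': the (unique up to isomorphism) tree on m vertices with maximum degree m-2:
a star with centre 0 and leaves 1..m-2, plus the vertex m-1 joined to the leaf 1.\<close>
definition Tprime :: "nat \<Rightarrow> graph" where
  "Tprime m = ({0..<m}, {{0, i} | i. 1 \<le> i \<and> i \<le> m - 2} \<union> {{1, m - 1}})"

end

theory Submission imports Defs begin

(* A vertex of degree >= m-1 has only leaves as neighbours, and the closed neighbourhood
   of a vertex of degree exactly m-2 is closed under adjacency; hence these closed
   neighbourhoods are disjoint blocks of m-1 vertices, and on the remaining vertices
   ("rest") all degrees are <= m-3.  When (m-1) does not divide N, or (for n = m+1 and
   m even) by a parity count of the edges inside the rest, some rest vertex u has small
   degree, and we embed T^1_n and T^2_n in the complement around u: either u has at least
   n-2 non-neighbours, or a double count of the edges between the neighbours and the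
   non-neighbours of u provides the two extra complement edges.

   The disjoint union of an (m-3)-regular circulant graph and possibly a
   clique K_{m-1} contains no T'_m, and all its complement degrees are <= n-4, so its
   complement contains no T^j_n (whose centre has degree n-3). *)

definition nbr :: "nat set set \<Rightarrow> nat \<Rightarrow> nat set" where
  "nbr E x = {y. {x, y} \<in> E}"

definition non_nbr :: "nat set \<Rightarrow> nat set set \<Rightarrow> nat \<Rightarrow> nat set" where
  "non_nbr V E x = {y \<in> V. y \<noteq> x \<and> {x, y} \<notin> E}"

lemma all_pairs_iff: "{x, y} \<in> all_pairs V \<longleftrightarrow> x \<in> V \<and> y \<in> V \<and> x \<noteq> y"
  unfolding all_pairs_def by (auto simp: doubleton_eq_iff)

lemma all_pairs_mono: "V \<subseteq> W \<Longrightarrow> all_pairs V \<subseteq> all_pairs W"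
  unfolding all_pairs_def by blast

lemma nbr_sym: "y \<in> nbr E x \<longleftrightarrow> x \<in> nbr E y"
  unfolding nbr_def by (simp add: insert_commute)

lemma nbr_subset: "simple_graph (V, E) \<Longrightarrow> nbr E x \<subseteq> V - {x}"
  unfolding nbr_def simple_graph_def using all_pairs_iff by auto

lemma nbr_in: "simple_graph (V, E) \<Longrightarrow> y \<in> nbr E x \<Longrightarrow> x \<in> V \<and> y \<in> V \<and> x \<noteq> y"
  using nbr_subset[of V E x] nbr_subset[of V E y] nbr_sym[of y E x] by blast

lemma finite_nbr: "simple_graph (V, E) \<Longrightarrow> finite (nbr E x)"
  using nbr_subset[of V E x] unfolding simple_graph_def by (auto intro: finite_subset)

lemma non_nbr_in: "z \<in> non_nbr V E x \<Longrightarrow> z \<in> V \<and> z \<noteq> x"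
  by (auto simp: non_nbr_def)

lemma finite_non_nbr: "finite V \<Longrightarrow> finite (non_nbr V E x)"
  by (auto simp: non_nbr_def)

lemma non_nbr_eq: "x \<in> V \<Longrightarrow> non_nbr V E x = V - {x} - nbr E x"
  unfolding non_nbr_def nbr_def by auto

(* Each of the other N - 1 vertices is adjacent to x either in G or in its complement. *)
lemma card_non_nbr:
  assumes s: "simple_graph (V, E)" and x: "x \<in> V"
  shows "card (non_nbr V E x) = card V - 1 - card (nbr E x)"
proof -
  have f: "finite V" using s by (simp add: simple_graph_def)
  have "card (V - {x} - nbr E x) = card (V - {x}) - card (nbr E x)"
    using nbr_subset[OF s, of x] f by (intro card_Diff_subset) (auto intro: finite_subset)
  then show ?thesis using non_nbr_eq[OF x] x f by simp
qed

lemma nbr_not_non_nbr: "y \<in> nbr E x \<Longrightarrow> y \<notin> non_nbr V E x"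
  by (simp add: nbr_def non_nbr_def)

lemma non_nbr_edge: "y \<in> non_nbr V E x \<Longrightarrow> x \<in> V \<Longrightarrow> {x, y} \<in> all_pairs V - E"
  unfolding non_nbr_def using all_pairs_iff by auto

lemma double_count:
  assumes "finite A" "finite B"
  shows "(\<Sum>a\<in>A. card (nbr E a \<inter> B)) = (\<Sum>b\<in>B. card (nbr E b \<inter> A))"
proof -
  have fa: "\<forall>a\<in>A. finite (nbr E a \<inter> B)" "\<forall>b\<in>B. finite (nbr E b \<inter> A)" using assms by auto
  have "(\<Sum>a\<in>A. card (nbr E a \<inter> B)) = card (SIGMA a:A. nbr E a \<inter> B)"
    using card_SigmaI[OF assms(1) fa(1)] by simp
  also have "(SIGMA a:A. nbr E a \<inter> B) = prod.swap ` (SIGMA b:B. nbr E b \<inter> A)"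
    using nbr_sym by (auto simp: image_iff)
  also have "card \<dots> = card (SIGMA b:B. nbr E b \<inter> A)"
    by (rule card_image) (simp add: inj_on_def)
  also have "\<dots> = (\<Sum>b\<in>B. card (nbr E b \<inter> A))"
    using card_SigmaI[OF assms(2) fa(2)] by simp
  finally show ?thesis .
qed

lemma even_card_sym_irrefl:
  assumes fin: "finite P" and sym: "\<And>a b. (a, b) \<in> P \<Longrightarrow> (b, a) \<in> P" and irr: "\<And>a. (a, a) \<notin> P"
  shows "even (card (P :: (nat \<times> nat) set))"
proof -
  define P1 where "P1 = {p \<in> P. fst p < snd p}"
  define P2 where "P2 = {p \<in> P. snd p < fst p}"
  have un: "P = P1 \<union> P2" using irr by (auto simp: P1_def P2_def) (metis nat_neq_iff surj_pair)
  have dis: "P1 \<inter> P2 = {}" by (auto simp: P1_def P2_def)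
  have sw: "P2 = prod.swap ` P1" using sym by (auto simp: P1_def P2_def image_iff)
  have c2: "card P2 = card P1" unfolding sw by (rule card_image) (auto simp: inj_on_def)
  have "card P = card P1 + card P2" unfolding un using fin un dis
    by (intro card_Un_disjoint) (auto intro: finite_subset)
  then show ?thesis using c2 by simp
qed

lemma pick_list:
  assumes "k \<le> card S"
  obtains rs where "distinct rs" "set rs \<subseteq> S" "length rs = k"
proof -
  obtain R where R: "R \<subseteq> S" "card R = k" "finite R" using obtain_subset_with_card_n[OF assms] by blast
  obtain rs where rs: "distinct rs" "set rs = R" using finite_distinct_list[OF R(3)] by blast
  have "length rs = k" using distinct_card[OF rs(1)] rs(2) R(2) by simp
  then show ?thesis using that rs R by blast
qed

lemma pick2:
  assumes "2 \<le> card S"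
  obtains x y where "x \<in> S" "y \<in> S" "x \<noteq> y"
proof -
  obtain rs where rs: "distinct rs" "set rs \<subseteq> S" "length rs = 2" using pick_list[OF assms] by blast
  then obtain x y where "rs = [x, y]" by (auto simp: numeral_2_eq_2 length_Suc_conv)
  then show ?thesis using that rs by auto
qed

lemma pick3:
  assumes "3 \<le> card S"
  obtains x y z where "x \<in> S" "y \<in> S" "z \<in> S" "x \<noteq> y" "x \<noteq> z" "y \<noteq> z"
proof -
  obtain rs where rs: "distinct rs" "set rs \<subseteq> S" "length rs = 3" using pick_list[OF assms] by blast
  then obtain x y z where "rs = [x, y, z]" by (auto simp: numeral_3_eq_3 length_Suc_conv)
  then show ?thesis using that rs by auto
qed

lemma avoid:
  assumes "finite F" "card F < card S"
  obtains x where "x \<in> S" "x \<notin> F"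
proof -
  have "\<not> S \<subseteq> F" using card_mono[OF assms(1)] assms(2) by (meson leD)
  then show ?thesis using that by blast
qed

lemma avoid2:
  assumes "3 \<le> card S"
  obtains x where "x \<in> S" "x \<notin> {p, q}"
proof (rule avoid)
  have "card {p, q} \<le> 2" by (cases "p = q") auto
  then show "card {p, q} < card S" using assms by linarith
qed simp

lemma avoid3:
  assumes "4 \<le> card S"
  obtains x where "x \<in> S" "x \<notin> {p, q, r}"
proof (rule avoid)
  have "card {p, q, r} \<le> 3" by (cases "p = q"; cases "p = r"; cases "q = r") (auto simp: insert_commute)
  then show "card {p, q, r} < card S" using assms by linarith
qed simp

lemma card_Diff_two_ge:
  assumes "finite A"
  shows "card A - 2 \<le> card (A - {c, d})"
proof -
  have "card A - card {c, d} \<le> card (A - {c, d})" by (rule diff_card_le_card_Diff) simp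
  moreover have "card {c, d} \<le> 2" by (cases "c = d") auto
  ultimately show ?thesis by linarith
qed

lemma contains_list:
  assumes "distinct xs" "set xs \<subseteq> V" "fst H = {0..<length xs}"
    "\<forall>e \<in> snd H. nth xs ` e \<in> F"
  shows "contains (V, F) H"
  unfolding contains_def
proof (intro exI[of _ "nth xs"] conjI)
  show "inj_on (nth xs) (fst H)" using assms inj_on_nth[of xs "{0..<length xs}"] by simp
  show "nth xs ` fst H \<subseteq> fst (V, F)" using assms(2,3) nth_mem by fastforce
  show "\<forall>e\<in>snd H. nth xs ` e \<in> snd (V, F)" using assms(4) by simp
qed

lemma nth_Cons_append_prefix:
  assumes "1 \<le> i" "i \<le> length ys"
  shows "(u # ys @ zs) ! i \<in> set ys"
proof -
  obtain k where "i = Suc k" using assms(1) by (cases i) auto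
  then show ?thesis using assms(2) by (simp add: nth_append)
qed

lemma nth_Cons_append_length: "(u # ys @ zs) ! Suc (length ys + k) = zs ! k"
  by (simp add: nth_append)

lemma Tprime_embed:
  assumes s: "simple_graph (V, E)" and m: "m \<ge> 4"
    and x: "x \<in> nbr E v" and rs: "distinct rs" "set rs \<subseteq> nbr E v" "length rs = m - 3" "x \<notin> set rs"
    and y: "y \<in> nbr E x" "y \<noteq> v" "y \<notin> set rs"
  shows "contains (V, E) (Tprime m)"
proof -
  define ys where "ys = x # rs"
  define xs where "xs = v # ys @ [y]"
  have "x \<noteq> v" "y \<noteq> x" "v \<notin> set rs" using nbr_in[OF s] x y(1) rs(2) by blast+
  then have dist: "distinct xs" using rs y by (auto simp: xs_def ys_def)
  have setV: "set xs \<subseteq> V" using nbr_in[OF s] rs(2) x y by (auto simp: xs_def ys_def)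
  have ly: "length ys = m - 2" using rs(3) m by (simp add: ys_def)
  have e1: "{v, xs ! i} \<in> E" if "1 \<le> i" "i \<le> m - 2" for i
    using nth_Cons_append_prefix[of i ys v "[y]"] that ly x rs(2) by (auto simp: xs_def ys_def nbr_def)
  have "m - 1 = Suc (length ys + 0)" using ly m by simp
  then have "xs ! 1 = x" "xs ! (m - 1) = y"
    by (simp add: xs_def ys_def, simp only: xs_def nth_Cons_append_length, simp)
  then have e2: "{xs ! 1, xs ! (m - 1)} \<in> E" using y(1) by (simp add: nbr_def)
  show ?thesis
  proof (rule contains_list[OF dist setV])
    have "length xs = m" using ly m by (simp add: xs_def)
    then show "fst (Tprime m) = {0..<length xs}" by (simp add: Tprime_def)
    show "\<forall>e\<in>snd (Tprime m). (!) xs ` e \<in> E"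
      using e1 e2 by (auto simp: Tprime_def xs_def)
  qed
qed

lemma T1_embed:
  assumes n: "n \<ge> 5" and u: "u \<in> V"
    and ab: "a \<in> non_nbr V E u" "b \<in> non_nbr V E u" "a \<noteq> b"
    and cd: "c \<in> non_nbr V E a" "d \<in> non_nbr V E b" "c \<noteq> d" "c \<notin> {u, a, b}" "d \<notin> {u, a, b}"
    and card: "card (non_nbr V E u - {c, d}) \<ge> n - 3"
  shows "contains (V, all_pairs V - E) (T1 n)"
proof -
  have "card (non_nbr V E u - {c, d} - {a, b}) = card (non_nbr V E u - {c, d}) - card {a, b}"
    using ab cd by (intro card_Diff_subset) auto
  then have "n - 5 \<le> card (non_nbr V E u - {c, d} - {a, b})" using card ab(3) by simp
  then obtain rs where rs: "distinct rs" "set rs \<subseteq> non_nbr V E u - {c, d} - {a, b}" "length rs = n - 5"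
    using pick_list by blast
  define ys where "ys = rs @ [a, b]"
  define xs where "xs = u # ys @ [c, d]"
  have inV: "non_nbr V E u \<subseteq> V" "a \<in> V" "b \<in> V" "c \<in> V" "d \<in> V"
    using ab cd by (auto simp: non_nbr_def)
  have ne: "u \<noteq> a" "u \<noteq> b" "u \<notin> non_nbr V E u"
    using non_nbr_in[OF ab(1)] non_nbr_in[OF ab(2)] by (auto simp: non_nbr_def)
  then have dist: "distinct xs" using rs ab(3) cd(3-5) by (auto simp: xs_def ys_def)
  have setV: "set xs \<subseteq> V" using rs(2) inV u by (auto simp: xs_def ys_def)
  have ly: "length ys = n - 3" using rs(3) n by (simp add: ys_def)
  have e1: "{u, xs ! i} \<in> all_pairs V - E" if "1 \<le> i" "i \<le> n - 3" for i
    using nth_Cons_append_prefix[of i ys u "[c, d]"] that ly rs(2) ab non_nbr_edge[OF _ u]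
    by (auto simp: xs_def ys_def)
  have "n - 4 = Suc (length rs + 0)" "n - 3 = Suc (length rs + 1)" "n - 2 = Suc (length rs + 2)"
     "n - 1 = Suc (length rs + 3)" using rs(3) n by simp_all
  then have "xs ! (n - 4) = a" "xs ! (n - 3) = b" "xs ! (n - 2) = c" "xs ! (n - 1) = d"
    by (simp_all only: xs_def ys_def append_assoc append_Cons append_Nil nth_Cons_append_length, simp_all)
  then have e2: "{xs ! (n - 4), xs ! (n - 2)} \<in> all_pairs V - E" "{xs ! (n - 3), xs ! (n - 1)} \<in> all_pairs V - E"
    using non_nbr_edge[OF cd(1)] non_nbr_edge[OF cd(2)] inV by auto
  have x0: "xs ! 0 = u" by (simp add: xs_def)
  show ?thesis
  proof (rule contains_list[OF dist setV])
    have "length xs = n" using ly n by (simp add: xs_def)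
    then show "fst (T1 n) = {0..<length xs}" by (simp add: T1_def)
    show "\<forall>e\<in>snd (T1 n). (!) xs ` e \<in> all_pairs V - E"
      using e1 e2 x0 by (auto simp: T1_def)
  qed
qed

lemma T2_embed:
  assumes n: "n \<ge> 5" and u: "u \<in> V"
    and a: "a \<in> non_nbr V E u"
    and cd: "c \<in> non_nbr V E a" "d \<in> non_nbr V E a" "c \<noteq> d" "c \<notin> {u, a}" "d \<notin> {u, a}"
    and card: "card (non_nbr V E u - {c, d}) \<ge> n - 3"
  shows "contains (V, all_pairs V - E) (T2 n)"
proof -
  have "card (non_nbr V E u - {c, d} - {a}) = card (non_nbr V E u - {c, d}) - card {a}"
    using a cd by (intro card_Diff_subset) auto
  then have "n - 4 \<le> card (non_nbr V E u - {c, d} - {a})" using card by simp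
  then obtain rs where rs: "distinct rs" "set rs \<subseteq> non_nbr V E u - {c, d} - {a}" "length rs = n - 4"
    using pick_list by blast
  define ys where "ys = rs @ [a]"
  define xs where "xs = u # ys @ [c, d]"
  have inV: "non_nbr V E u \<subseteq> V" "a \<in> V" "c \<in> V" "d \<in> V"
    using a cd by (auto simp: non_nbr_def)
  have ne: "u \<noteq> a" "u \<notin> non_nbr V E u" using non_nbr_in[OF a] by (auto simp: non_nbr_def)
  then have dist: "distinct xs" using rs cd(3-5) by (auto simp: xs_def ys_def)
  have setV: "set xs \<subseteq> V" using rs(2) inV u by (auto simp: xs_def ys_def)
  have ly: "length ys = n - 3" using rs(3) n by (simp add: ys_def)
  have e1: "{u, xs ! i} \<in> all_pairs V - E" if "1 \<le> i" "i \<le> n - 3" for i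
    using nth_Cons_append_prefix[of i ys u "[c, d]"] that ly rs(2) a non_nbr_edge[OF _ u]
    by (auto simp: xs_def ys_def)
  have "n - 3 = Suc (length rs + 0)" "n - 2 = Suc (length rs + 1)" "n - 1 = Suc (length rs + 2)"
    using rs(3) n by simp_all
  then have "xs ! (n - 3) = a" "xs ! (n - 2) = c" "xs ! (n - 1) = d"
    by (simp_all only: xs_def ys_def append_assoc append_Cons append_Nil nth_Cons_append_length, simp_all)
  then have e2: "{xs ! (n - 3), xs ! (n - 2)} \<in> all_pairs V - E" "{xs ! (n - 3), xs ! (n - 1)} \<in> all_pairs V - E"
    using non_nbr_edge[OF cd(1)] non_nbr_edge[OF cd(2)] inV by auto
  have x0: "xs ! 0 = u" by (simp add: xs_def)
  show ?thesis
  proof (rule contains_list[OF dist setV])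
    have "length xs = n" using ly n by (simp add: xs_def)
    then show "fst (T2 n) = {0..<length xs}" by (simp add: T2_def)
    show "\<forall>e\<in>snd (T2 n). (!) xs ` e \<in> all_pairs V - E"
      using e1 e2 x0 by (auto simp: T2_def)
  qed
qed

(* Obstruction to T'_m: every vertex has degree <= m-3, or degree m-2 with all neighbours of
   its neighbours inside its closed neighbourhood (so the leaf v_{m-1} has nowhere to go). *)
lemma no_Tprime:
  assumes s: "simple_graph (V, E)" and m: "m \<ge> 4"
    and dg: "\<forall>v\<in>V. card (nbr E v) \<le> m - 3 \<or>
                 (card (nbr E v) = m - 2 \<and> (\<forall>x\<in>nbr E v. nbr E x \<subseteq> insert v (nbr E v)))"
  shows "\<not> contains (V, E) (Tprime m)"
proof
  assume "contains (V, E) (Tprime m)"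
  then obtain f where inj: "inj_on f {0..<m}" and img: "f ` {0..<m} \<subseteq> V"
    and ed: "\<forall>e\<in>snd (Tprime m). f ` e \<in> E"
    unfolding contains_def by (auto simp: Tprime_def)
  define v where "v = f 0"
  have vV: "v \<in> V" using img m by (auto simp: v_def)
  have sub: "f ` {1..m-2} \<subseteq> nbr E v"
  proof
    fix y assume "y \<in> f ` {1..m-2}"
    then obtain i where i: "1 \<le> i" "i \<le> m - 2" "y = f i" by auto
    then have "{0, i} \<in> snd (Tprime m)" by (auto simp: Tprime_def)
    then have "f ` {0, i} \<in> E" using ed by blast
    then show "y \<in> nbr E v" using i by (simp add: nbr_def v_def)
  qed
  have "{1..m-2} \<subseteq> {0..<m}" using m by auto
  then have cimg: "card (f ` {1..m-2}) = m - 2"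
    using inj_on_subset[OF inj] m by (subst card_image) auto
  have "m - 2 \<le> card (nbr E v)" using card_mono[OF finite_nbr[OF s] sub] cimg by simp
  moreover have "card (nbr E v) \<le> m - 3 \<or>
                 (card (nbr E v) = m - 2 \<and> (\<forall>x\<in>nbr E v. nbr E x \<subseteq> insert v (nbr E v)))"
    using dg vV by blast
  ultimately have d2: "card (nbr E v) = m - 2" and cl: "\<forall>x\<in>nbr E v. nbr E x \<subseteq> insert v (nbr E v)"
    using m by auto
  have eq: "nbr E v = f ` {1..m-2}" using card_subset_eq[OF finite_nbr[OF s] sub] cimg d2 by simp
  have "f ` {1, m - 1} \<in> E" using ed by (simp add: Tprime_def)
  then have "f (m - 1) \<in> nbr E (f 1)" by (simp add: nbr_def)
  moreover have "f 1 \<in> nbr E v" using sub m by force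
  ultimately have "f (m - 1) \<in> f ` insert 0 {1..m-2}" using cl eq by (auto simp: v_def)
  moreover have "insert 0 {1..m-2} \<subseteq> {0..<m}" "m - 1 \<in> {0..<m}" using m by auto
  ultimately have "m - 1 \<in> insert 0 {1..m-2}" using inj_on_image_mem_iff[OF inj] by blast
  then show False using m by auto
qed

lemma fst_Tj: "fst (Tj j n) = {0..<n}" by (simp add: Tj_def T1_def T2_def)

(* Obstruction to T^j_n in the complement: the centre of T^j_n has degree n-3. *)
lemma no_Tj:
  assumes s: "simple_graph (V, E)" and n: "n \<ge> 4"
    and dg: "\<forall>v\<in>V. card (non_nbr V E v) \<le> n - 4"
  shows "\<not> contains (V, all_pairs V - E) (Tj j n)"
proof
  assume "contains (V, all_pairs V - E) (Tj j n)"
  then obtain f where inj: "inj_on f {0..<n}" and img: "f ` {0..<n} \<subseteq> V"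
    and ed: "\<forall>e\<in>snd (Tj j n). f ` e \<in> all_pairs V - E"
    unfolding contains_def by (auto simp: fst_Tj)
  define v where "v = f 0"
  have vV: "v \<in> V" using img n by (auto simp: v_def)
  have sub: "f ` {1..n-3} \<subseteq> non_nbr V E v"
  proof
    fix y assume "y \<in> f ` {1..n-3}"
    then obtain i where i: "1 \<le> i" "i \<le> n - 3" "y = f i" by auto
    then have "{0, i} \<in> snd (Tj j n)" by (auto simp: Tj_def T1_def T2_def)
    then have "{f 0, f i} \<in> all_pairs V - E" using ed by fastforce
    then show "y \<in> non_nbr V E v" using i all_pairs_iff by (auto simp: non_nbr_def v_def)
  qed
  have "{1..n-3} \<subseteq> {0..<n}" using n by auto
  then have cimg: "card (f ` {1..n-3}) = n - 3"
    using inj_on_subset[OF inj] n by (subst card_image) auto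
  have fin: "finite (non_nbr V E v)" using s by (simp add: simple_graph_def finite_non_nbr)
  have "n - 3 \<le> card (non_nbr V E v)" using card_mono[OF fin sub] cimg by simp
  moreover have "card (non_nbr V E v) \<le> n - 4" using dg vV by blast
  ultimately show False using n by linarith
qed

(* Since
   every complement degree is >= 4, the missing leaves d (at b) and d' (at a) can be found. *)
lemma trees_at_centre:
  assumes fV: "finite V" and n: "n \<ge> 5" and u: "u \<in> V"
    and kH: "\<forall>w\<in>V. 4 \<le> card (non_nbr V E w)"
    and ab: "a \<in> non_nbr V E u" "b \<in> non_nbr V E u" "a \<noteq> b"
    and c: "c \<in> non_nbr V E a" "c \<notin> {u, b}"
    and card: "n - 2 \<le> card (non_nbr V E u - {c})"
  shows "contains (V, all_pairs V - E) (T1 n) \<and> contains (V, all_pairs V - E) (T2 n)"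
proof -
  have ka: "4 \<le> card (non_nbr V E a)" "4 \<le> card (non_nbr V E b)" using kH ab non_nbr_in by auto
  obtain d where d: "d \<in> non_nbr V E b" "d \<notin> {u, a, c}"
    using avoid3[of "non_nbr V E b" u a c] ka(2) by blast
  have "3 \<le> card (non_nbr V E a)" using ka(1) by simp
  then obtain d' where d': "d' \<in> non_nbr V E a" "d' \<notin> {u, c}" by (rule avoid2)
  have ne: "a \<noteq> c" "b \<noteq> d" "a \<noteq> d'" using c(1) d(1) d'(1) non_nbr_in by blast+
  have fin: "finite (non_nbr V E u - {c})" using finite_non_nbr[OF fV] by simp
  have "n - 3 \<le> card (non_nbr V E u - {c, x})" for x
  proof -
    have eq: "non_nbr V E u - {c, x} = non_nbr V E u - {c} - {x}" by blast
    have "card (non_nbr V E u - {c}) - 1 \<le> card (non_nbr V E u - {c} - {x})"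
      using fin by (cases "x \<in> non_nbr V E u - {c}") auto
    then show ?thesis unfolding eq using card by linarith
  qed
  then have cc: "n - 3 \<le> card (non_nbr V E u - {c, d})" "n - 3 \<le> card (non_nbr V E u - {c, d'})"
    by blast+
  have "contains (V, all_pairs V - E) (T1 n)"
    by (rule T1_embed[OF n u ab c(1) d(1) _ _ _ cc(1)]) (use c d ne in blast)+
  moreover have "contains (V, all_pairs V - E) (T2 n)"
    by (rule T2_embed[OF n u ab(1) c(1) d'(1) _ _ _ cc(2)]) (use c d' ne in blast)+
  ultimately show ?thesis ..
qed

lemma cross_non_nbr_iff:
  assumes s: "simple_graph (V, E)" and a: "a \<in> non_nbr V E u" and c: "c \<in> nbr E u"
  shows "c \<in> non_nbr V E a \<longleftrightarrow> c \<notin> nbr E a"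
proof -
  have "c \<in> V" using nbr_in[OF s c] by blast
  moreover have "c \<noteq> a" using a nbr_not_non_nbr[OF c] by blast
  ultimately show ?thesis by (simp add: non_nbr_def nbr_def insert_commute)
qed

(* A neighbour c of u with at most as many neighbours as u has complement neighbours misses
   some complement neighbour of u, since it is also adjacent to u itself. *)
lemma nbr_misses_non_nbr:
  assumes s: "simple_graph (V, E)" and c: "c \<in> nbr E u"
    and dc: "card (nbr E c) \<le> card (non_nbr V E u)"
  obtains a where "a \<in> non_nbr V E u" "c \<in> non_nbr V E a"
proof -
  have "\<not> insert u (non_nbr V E u) \<subseteq> nbr E c"
  proof
    assume "insert u (non_nbr V E u) \<subseteq> nbr E c"
    then have "card (insert u (non_nbr V E u)) \<le> card (nbr E c)"
      using finite_nbr[OF s] by (rule card_mono[rotated])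
    moreover have "u \<notin> non_nbr V E u" by (simp add: non_nbr_def)
    moreover have "finite (non_nbr V E u)" using s by (simp add: simple_graph_def finite_non_nbr)
    ultimately show False using dc by simp
  qed
  moreover have "u \<in> nbr E c" using c nbr_sym by blast
  ultimately obtain a where "a \<in> non_nbr V E u" "a \<notin> nbr E c" by blast
  then show ?thesis using that cross_non_nbr_iff[OF s _ c] nbr_sym by blast
qed

lemma rich_centre_case:
  assumes s: "simple_graph (V, E)" and n: "n \<ge> 5" and u: "u \<in> V"
    and kH: "\<forall>w\<in>V. 4 \<le> card (non_nbr V E w)"
    and A: "n - 2 \<le> card (non_nbr V E u)"
    and e: "nbr E u = {} \<Longrightarrow> n - 1 \<le> card (non_nbr V E u)"
    and dg: "\<forall>w\<in>V. card (nbr E w) \<le> card (non_nbr V E u)"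
  shows "contains (V, all_pairs V - E) (T1 n) \<and> contains (V, all_pairs V - E) (T2 n)"
proof -
  have fV: "finite V" using s by (simp add: simple_graph_def)
  have "2 \<le> card (non_nbr V E u)" using A n by linarith
  then obtain b1 b2 where b12: "b1 \<in> non_nbr V E u" "b2 \<in> non_nbr V E u" "b1 \<noteq> b2" by (rule pick2)
  show ?thesis
  proof (cases "n - 1 \<le> card (non_nbr V E u)")
    case True
    have "4 \<le> card (non_nbr V E b1)" using kH b12 non_nbr_in by blast
    then have "3 \<le> card (non_nbr V E b1)" by simp
    then obtain c where c: "c \<in> non_nbr V E b1" "c \<notin> {u, b2}" by (rule avoid2)
    have "card (non_nbr V E u) - 1 \<le> card (non_nbr V E u - {c})"
      using finite_non_nbr[OF fV] by (cases "c \<in> non_nbr V E u") auto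
    then have "n - 2 \<le> card (non_nbr V E u - {c})" using True by linarith
    then show ?thesis by (rule trees_at_centre[OF fV n u kH b12 c])
  next
    case False
    then obtain c where c: "c \<in> nbr E u" using e by blast
    then have "card (nbr E c) \<le> card (non_nbr V E u)" using dg nbr_in[OF s c] by blast
    then obtain a where a: "a \<in> non_nbr V E u" "c \<in> non_nbr V E a" by (rule nbr_misses_non_nbr[OF s c])
    obtain b where b: "b \<in> non_nbr V E u" "a \<noteq> b" using b12 by blast
    have "c \<notin> non_nbr V E u" using nbr_not_non_nbr[OF c] .
    then have "n - 2 \<le> card (non_nbr V E u - {c})" using A by simp
    moreover have "c \<notin> {u, b}" using nbr_in[OF s c] nbr_not_non_nbr[OF c] b by blast
    ultimately show ?thesis using trees_at_centre[OF fV n u kH a(1) b a(2)] by blast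
  qed
qed

lemma T1_from_cross_non_edges:
  assumes s: "simple_graph (V, E)" and n: "n \<ge> 5" and u: "u \<in> V"
    and ab: "a \<in> non_nbr V E u" "b \<in> non_nbr V E u" "a \<noteq> b"
    and cd: "c \<in> nbr E u" "d \<in> nbr E u" "c \<noteq> d" "c \<in> non_nbr V E a" "d \<in> non_nbr V E b"
    and An: "n - 3 \<le> card (non_nbr V E u)"
  shows "contains (V, all_pairs V - E) (T1 n)"
proof (rule T1_embed[OF n u ab cd(4,5,3)])
  have out: "c \<notin> non_nbr V E u" "d \<notin> non_nbr V E u" using cd(1,2) by (simp_all add: nbr_not_non_nbr)
  then show "n - 3 \<le> card (non_nbr V E u - {c, d})" using An by (simp add: Diff_insert_absorb)
  have "u \<noteq> c" "u \<noteq> d" using nbr_in[OF s cd(1)] nbr_in[OF s cd(2)] by blast+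
  moreover have "a \<noteq> c" "b \<noteq> d" using non_nbr_in[OF cd(4)] non_nbr_in[OF cd(5)] by blast+
  ultimately show "c \<notin> {u, a, b}" "d \<notin> {u, a, b}" using ab out by blast+
qed

lemma T2_from_cross_non_edges:
  assumes s: "simple_graph (V, E)" and n: "n \<ge> 5" and u: "u \<in> V"
    and a: "a \<in> non_nbr V E u"
    and cd: "c \<in> nbr E u" "d \<in> nbr E u" "c \<noteq> d" "c \<in> non_nbr V E a" "d \<in> non_nbr V E a"
    and An: "n - 3 \<le> card (non_nbr V E u)"
  shows "contains (V, all_pairs V - E) (T2 n)"
proof (rule T2_embed[OF n u a cd(4,5,3)])
  have "c \<notin> non_nbr V E u" "d \<notin> non_nbr V E u" using cd(1,2) by (simp_all add: nbr_not_non_nbr)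
  then show "n - 3 \<le> card (non_nbr V E u - {c, d})" using An by (simp add: Diff_insert_absorb)
  have "u \<noteq> c" "u \<noteq> d" using nbr_in[OF s cd(1)] nbr_in[OF s cd(2)] by blast+
  moreover have "a \<noteq> c" "a \<noteq> d" using non_nbr_in[OF cd(4)] non_nbr_in[OF cd(5)] by blast+
  ultimately show "c \<notin> {u, a}" "d \<notin> {u, a}" by blast+
qed

(* Without T^2_n in the complement, every complement neighbour a of u is non-adjacent to at
   most one neighbour of u (two of them would complete T^2_n with centre u). *)
lemma dense_cross_edges:
  assumes s: "simple_graph (V, E)" and n: "n \<ge> 5" and u: "u \<in> V"
    and An: "n - 3 \<le> card (non_nbr V E u)"
    and noT2: "\<not> contains (V, all_pairs V - E) (T2 n)"
    and a: "a \<in> non_nbr V E u"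
  shows "card (nbr E u) - 1 \<le> card (nbr E a \<inter> nbr E u)"
proof -
  have "card (non_nbr V E a \<inter> nbr E u) \<le> 1"
  proof (rule ccontr)
    assume "\<not> ?thesis"
    then have "2 \<le> card (non_nbr V E a \<inter> nbr E u)" by simp
    then obtain c d where cd: "c \<in> non_nbr V E a \<inter> nbr E u" "d \<in> non_nbr V E a \<inter> nbr E u" "c \<noteq> d"
      by (rule pick2)
    then have "contains (V, all_pairs V - E) (T2 n)"
      by (intro T2_from_cross_non_edges[OF s n u a _ _ cd(3) _ _ An]) simp_all
    with noT2 show False ..
  qed
  moreover have "nbr E u = (nbr E a \<inter> nbr E u) \<union> (non_nbr V E a \<inter> nbr E u)"
    using cross_non_nbr_iff[OF s a] by auto
  then have "card (nbr E u) \<le> card (nbr E a \<inter> nbr E u) + card (non_nbr V E a \<inter> nbr E u)"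
    by (metis card_Un_le)
  ultimately show ?thesis by linarith
qed

(* Then both
   complement trees exist: T^1_n directly, and T^2_n because otherwise, by dense_cross_edges,
   double counting the edges between A and B contradicts the inequality. *)
lemma double_count_case:
  assumes s: "simple_graph (V, E)" and n: "n \<ge> 5" and u: "u \<in> V"
    and sparse: "\<forall>b\<in>nbr E u. card (nbr E b \<inter> non_nbr V E u) \<le> k"
    and B2: "2 \<le> card (nbr E u)"
    and Ak: "k + 2 \<le> card (non_nbr V E u)"
    and An: "n - 3 \<le> card (non_nbr V E u)"
    and cnt: "card (nbr E u) * k < card (non_nbr V E u) * (card (nbr E u) - 1)"
  shows "contains (V, all_pairs V - E) (T1 n) \<and> contains (V, all_pairs V - E) (T2 n)"
proof -
  define A where "A = non_nbr V E u"
  define B where "B = nbr E u"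
  have fV: "finite V" using s by (simp add: simple_graph_def)
  have fA: "finite A" "finite B" using finite_non_nbr[OF fV] finite_nbr[OF s] by (auto simp: A_def B_def)
  have free: "2 \<le> card (A - nbr E b)" if b: "b \<in> B" for b
  proof -
    have "card (A - nbr E b) = card A - card (nbr E b \<inter> A)"
      using fA(1) by (simp add: card_Diff_subset_Int Diff_Int2 Int_commute)
    moreover have "card (nbr E b \<inter> A) \<le> k" using sparse b by (simp add: A_def B_def)
    ultimately show ?thesis using Ak by (simp add: A_def)
  qed
  obtain c d where cd: "c \<in> B" "d \<in> B" "c \<noteq> d" using B2 pick2 by (metis B_def)
  obtain a where a: "a \<in> A - nbr E c" using pick2[OF free[OF cd(1)]] by blast
  obtain b1 b2 where b12: "b1 \<in> A - nbr E d" "b2 \<in> A - nbr E d" "b1 \<noteq> b2"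
    using free[OF cd(2)] by (rule pick2)
  obtain b where b: "b \<in> A - nbr E d" "a \<noteq> b" using b12 by blast
  have "contains (V, all_pairs V - E) (T1 n)"
  proof (rule T1_from_cross_non_edges[OF s n u _ _ b(2) _ _ cd(3) _ _ An])
    show ab: "a \<in> non_nbr V E u" "b \<in> non_nbr V E u" using a(1) b(1) by (simp_all add: A_def)
    show cd': "c \<in> nbr E u" "d \<in> nbr E u" using cd by (simp_all add: B_def)
    show "c \<in> non_nbr V E a" "d \<in> non_nbr V E b"
      using cross_non_nbr_iff[OF s ab(1) cd'(1)] cross_non_nbr_iff[OF s ab(2) cd'(2)] a(1) b(1) nbr_sym
      by blast+
  qed
  moreover have "contains (V, all_pairs V - E) (T2 n)"
  proof (rule ccontr)
    assume noT2: "\<not> ?thesis"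
    have "card A * (card B - 1) \<le> (\<Sum>a\<in>A. card (nbr E a \<inter> B))"
      using sum_bounded_below[of A "card B - 1" "\<lambda>a. card (nbr E a \<inter> B)"]
        dense_cross_edges[OF s n u An noT2] by (simp add: A_def B_def)
    also have "\<dots> = (\<Sum>b\<in>B. card (nbr E b \<inter> A))" by (rule double_count[OF fA])
    also have "\<dots> \<le> card B * k"
      using sum_bounded_above[of B "\<lambda>b. card (nbr E b \<inter> A)" k] sparse by (simp add: A_def B_def)
    finally show False using cnt by (simp add: A_def B_def)
  qed
  ultimately show ?thesis ..
qed

definition closed_nbr :: "nat set set \<Rightarrow> nat \<Rightarrow> nat set" where
  "closed_nbr E v = insert v (nbr E v)"

locale Tprime_free =
  fixes V :: "nat set" and E :: "nat set set" and m :: nat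
  assumes s: "simple_graph (V, E)" and m4: "m \<ge> 4" and free: "\<not> contains (V, E) (Tprime m)"
begin

lemma fV: "finite V" using s by (simp add: simple_graph_def)

(* A vertex of degree >= m-1 has only leaves as neighbours: a second neighbour y of x would
   complete T'_m with v as centre. *)
lemma high_degree_leaves:
  assumes x: "x \<in> nbr E v" and d: "m - 1 \<le> card (nbr E v)"
  shows "nbr E x = {v}"
proof -
  have "y = v" if y: "y \<in> nbr E x" for y
  proof (rule ccontr)
    assume yv: "y \<noteq> v"
    have "card (nbr E v) - card {x, y} \<le> card (nbr E v - {x, y})"
      by (rule diff_card_le_card_Diff) simp
    moreover have "card {x, y} \<le> 2" by (simp add: card_insert_le_m1)
    ultimately have "m - 3 \<le> card (nbr E v - {x, y})" using d by linarith
    then obtain rs where rs: "distinct rs" "set rs \<subseteq> nbr E v - {x, y}" "length rs = m - 3"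
      using pick_list by blast
    have "contains (V, E) (Tprime m)"
      by (rule Tprime_embed[OF s m4 x rs(1) _ rs(3) _ y yv]) (use rs(2) in auto)
    with free show False ..
  qed
  moreover have "v \<in> nbr E x" using x nbr_sym by blast
  ultimately show ?thesis by blast
qed

(* The closed neighbourhood of a vertex of degree m-2 is closed under adjacency: a neighbour
   of a neighbour outside it would complete T'_m. *)
lemma closed_nbr_closed:
  assumes v: "card (nbr E v) = m - 2" and x: "x \<in> closed_nbr E v"
  shows "nbr E x \<subseteq> closed_nbr E v"
proof
  fix y assume y: "y \<in> nbr E x"
  show "y \<in> closed_nbr E v"
  proof (rule ccontr)
    assume yn: "y \<notin> closed_nbr E v"
    then have xv: "x \<in> nbr E v" using x y by (auto simp: closed_nbr_def)
    have "card (nbr E v - {x}) = m - 3" using v xv finite_nbr[OF s] by simp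
    then obtain rs where rs: "distinct rs" "set rs \<subseteq> nbr E v - {x}" "length rs = m - 3"
      using pick_list by (metis order_refl)
    have "contains (V, E) (Tprime m)"
      by (rule Tprime_embed[OF s m4 xv rs(1) _ rs(3) _ y]) (use rs(2) yn in \<open>auto simp: closed_nbr_def\<close>)
    with free show False ..
  qed
qed

lemma closed_nbr_eq:
  assumes v: "card (nbr E v) = m - 2" and v': "card (nbr E v') = m - 2"
    and w: "w \<in> closed_nbr E v" "w \<in> closed_nbr E v'"
  shows "closed_nbr E v = closed_nbr E v'"
proof -
  have sub: "closed_nbr E b \<subseteq> closed_nbr E a"
    if a: "card (nbr E a) = m - 2" and wa: "w \<in> closed_nbr E a" and wb: "w \<in> closed_nbr E b" for a b
  proof -
    have "b \<in> closed_nbr E a"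
    proof (cases "w = b")
      case False
      then have "b \<in> nbr E w" using wb nbr_sym by (simp add: closed_nbr_def)
      then show ?thesis using closed_nbr_closed[OF a wa] by blast
    qed (use wa in simp)
    then have "nbr E b \<subseteq> closed_nbr E a" using closed_nbr_closed[OF a] by blast
    then show ?thesis using \<open>b \<in> closed_nbr E a\<close> by (simp add: closed_nbr_def)
  qed
  show ?thesis using sub[OF v w] sub[OF v' w(2,1)] by blast
qed

lemma card_closed_nbr:
  assumes "card (nbr E v) = m - 2"
  shows "card (closed_nbr E v) = m - 1"
proof -
  have "v \<notin> nbr E v" using nbr_in[OF s] by blast
  then show ?thesis using assms finite_nbr[OF s] m4 by (simp add: closed_nbr_def)
qed

lemma closed_nbr_subset: "v \<in> V \<Longrightarrow> closed_nbr E v \<subseteq> V"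
  using nbr_subset[OF s] by (auto simp: closed_nbr_def)

definition centres where "centres = {v \<in> V. card (nbr E v) = m - 2}"
definition covered where "covered = \<Union> (closed_nbr E ` centres)"
definition rest where "rest = V - covered"

lemma card_covered: "card covered = (m - 1) * card (closed_nbr E ` centres)"
  unfolding covered_def
proof (rule card_partition[symmetric])
  show "finite (closed_nbr E ` centres)" using fV by (simp add: centres_def)
  show "finite (\<Union> (closed_nbr E ` centres))"
    using closed_nbr_subset fV by (auto simp: centres_def intro: finite_subset)
  show "\<And>c. c \<in> closed_nbr E ` centres \<Longrightarrow> card c = m - 1"
    using card_closed_nbr by (auto simp: centres_def)
  show "\<And>c1 c2. c1 \<in> closed_nbr E ` centres \<Longrightarrow> c2 \<in> closed_nbr E ` centres \<Longrightarrow> c1 \<noteq> c2 \<Longrightarrow> c1 \<inter> c2 = {}"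
    using closed_nbr_eq by (auto simp: centres_def)
qed

lemma card_covered_rest: "card V = card covered + card rest"
proof -
  have "covered \<subseteq> V" unfolding covered_def using closed_nbr_subset by (auto simp: centres_def)
  then show ?thesis unfolding rest_def using fV
    by (metis card_Diff_subset finite_subset le_add_diff_inverse card_mono)
qed

lemma rest_degree:
  assumes md: "\<forall>v\<in>V. card (nbr E v) \<le> m - 2" and u: "u \<in> rest"
  shows "card (nbr E u) \<le> m - 3"
proof (rule ccontr)
  assume "\<not> ?thesis"
  then have "u \<in> centres" using md u m4 by (fastforce simp: rest_def centres_def)
  then have "u \<in> covered" by (auto simp: covered_def closed_nbr_def)
  then show False using u by (simp add: rest_def)
qed

lemma rest_closed:
  assumes u: "u \<in> rest" and b: "b \<in> nbr E u"
  shows "b \<in> rest"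
proof (rule ccontr)
  assume "b \<notin> rest"
  then have "b \<in> covered" using nbr_in[OF s b] by (simp add: rest_def)
  then obtain v where v: "v \<in> centres" "b \<in> closed_nbr E v" by (auto simp: covered_def)
  then have "u \<in> closed_nbr E v" using closed_nbr_closed[of v b] b nbr_sym by (auto simp: centres_def)
  then have "u \<in> covered" using v by (auto simp: covered_def)
  then show False using u by (simp add: rest_def)
qed

(* Handshake lemma on the rest, which is a union of components. *)
lemma even_rest_regular:
  assumes reg: "\<forall>u\<in>rest. card (nbr E u) = k"
  shows "even (k * card rest)"
proof -
  have fW: "finite rest" using fV by (simp add: rest_def)
  have "k * card rest = (\<Sum>u\<in>rest. card (nbr E u))" using reg by simp
  also have "\<dots> = card (SIGMA u:rest. nbr E u)"
    using card_SigmaI[OF fW, of "nbr E"] finite_nbr[OF s] by simp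
  finally have eq: "k * card rest = card (SIGMA u:rest. nbr E u)" .
  have "even (card (SIGMA u:rest. nbr E u))"
  proof (rule even_card_sym_irrefl)
    show "finite (SIGMA u:rest. nbr E u)" using fW finite_nbr[OF s] by simp
    show "\<And>a b. (a, b) \<in> (SIGMA u:rest. nbr E u) \<Longrightarrow> (b, a) \<in> (SIGMA u:rest. nbr E u)"
      using rest_closed nbr_sym by blast
    show "\<And>a. (a, a) \<notin> (SIGMA u:rest. nbr E u)" using nbr_in[OF s] by blast
  qed
  then show ?thesis using eq by simp
qed

(* A vertex v of degree >= m-1: three of its neighbours x, y, z are leaves, so x is a
   complement centre adjacent (in the complement) to everything except v. *)
lemma high_degree_case:
  assumes v: "m - 1 \<le> card (nbr E v)" and N: "n + 1 \<le> card V" and n: "n \<ge> 5"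
  shows "contains (V, all_pairs V - E) (T1 n) \<and> contains (V, all_pairs V - E) (T2 n)"
proof -
  have "3 \<le> card (nbr E v)" using v m4 by linarith
  then obtain x y z where xyz: "x \<in> nbr E v" "y \<in> nbr E v" "z \<in> nbr E v" "x \<noteq> y" "x \<noteq> z" "y \<noteq> z"
    by (rule pick3)
  have inV: "v \<in> V" "x \<in> V" "y \<in> V" "z \<in> V" "v \<noteq> x" "v \<noteq> y" "v \<noteq> z"
    using nbr_in[OF s] xyz by blast+
  have leaf: "non_nbr V E w = V - {w, v}" if "w \<in> {x, y, z}" for w
    using that non_nbr_eq high_degree_leaves[OF _ v] xyz inV by auto
  have "card (V - {x, y, z, v}) = card V - 4" using inV xyz fV by (simp add: card_Diff_subset)
  then have "2 \<le> card (V - {x, y, z, v})" using N n by linarith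
  then obtain c d where cd: "c \<in> V - {x, y, z, v}" "d \<in> V - {x, y, z, v}" "c \<noteq> d" by (rule pick2)
  have c1: "y \<in> non_nbr V E x" "z \<in> non_nbr V E x" using leaf xyz inV by auto
  have c2: "c \<in> non_nbr V E y" "d \<in> non_nbr V E z" "d \<in> non_nbr V E y" using cd leaf by auto
  have "card (non_nbr V E x) = card V - 2" using leaf[of x] inV fV by (simp add: card_Diff_subset)
  then have ccard: "n - 3 \<le> card (non_nbr V E x - {c, d})"
    using card_Diff_two_ge[OF finite_non_nbr[OF fV, of E x], of c d] N by linarith
  have "contains (V, all_pairs V - E) (T1 n)"
    by (rule T1_embed[OF n inV(2) c1 xyz(6) c2(1,2) cd(3) _ _ ccard]) (use cd in auto)
  moreover have "contains (V, all_pairs V - E) (T2 n)"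
    by (rule T2_embed[OF n inV(2) c1(1) c2(1,3) cd(3) _ _ ccard]) (use cd in auto)
  ultimately show ?thesis ..
qed

lemma rest_vertex_case:
  assumes md: "\<forall>v\<in>V. card (nbr E v) \<le> m - 2" and uW: "u \<in> rest"
    and n: "n \<ge> 5" "m \<le> n" and N: "n \<le> card V" "m + 3 \<le> card V"
    and sparse: "card (non_nbr V E u) < n - 2 \<Longrightarrow>
       2 \<le> card (nbr E u) \<and> m - 2 \<le> card (non_nbr V E u) \<and> n - 3 \<le> card (non_nbr V E u) \<and>
       card (nbr E u) * (m - 4) < card (non_nbr V E u) * (card (nbr E u) - 1)"
  shows "contains (V, all_pairs V - E) (T1 n) \<and> contains (V, all_pairs V - E) (T2 n)"
proof -
  have u: "u \<in> V" using uW by (simp add: rest_def)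
  have kH: "\<forall>w\<in>V. 4 \<le> card (non_nbr V E w)"
    using md card_non_nbr[OF s] N m4 by fastforce
  show ?thesis
  proof (cases "n - 2 \<le> card (non_nbr V E u)")
    case True
    show ?thesis
    proof (rule rich_centre_case[OF s n(1) u kH True])
      show "nbr E u = {} \<Longrightarrow> n - 1 \<le> card (non_nbr V E u)" using card_non_nbr[OF s u] N by simp
      show "\<forall>w\<in>V. card (nbr E w) \<le> card (non_nbr V E u)" using md True n by fastforce
    qed
  next
    case False
    have "\<forall>b\<in>nbr E u. card (nbr E b \<inter> non_nbr V E u) \<le> m - 4"
    proof
      fix b assume b: "b \<in> nbr E u"
      have "nbr E b \<inter> non_nbr V E u \<subseteq> nbr E b - {u}" by (auto simp: non_nbr_def)
      moreover have "card (nbr E b - {u}) = card (nbr E b) - 1"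
        using finite_nbr[OF s] b nbr_sym by simp
      ultimately have "card (nbr E b \<inter> non_nbr V E u) \<le> card (nbr E b) - 1"
        using card_mono[OF finite_Diff[OF finite_nbr[OF s]]] by metis
      then show "card (nbr E b \<inter> non_nbr V E u) \<le> m - 4"
        using rest_degree[OF md rest_closed[OF uW b]] by linarith
    qed
    moreover have "2 \<le> card (nbr E u) \<and> m - 2 \<le> card (non_nbr V E u) \<and> n - 3 \<le> card (non_nbr V E u) \<and>
       card (nbr E u) * (m - 4) < card (non_nbr V E u) * (card (nbr E u) - 1)"
      using sparse False by simp
    moreover have "m - 4 + 2 = m - 2" using m4 by simp
    ultimately show ?thesis using double_count_case[OF s n(1) u, of "m - 4"] by metis
  qed
qed

lemma rest_nonempty: "\<not> (m - 1) dvd card V \<Longrightarrow> rest \<noteq> {}"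
  using card_covered_rest card_covered by force

lemma upper_nondivisible:
  assumes N: "card V = m + n - 5" and nm: "m + 1 \<le> n" and m7: "7 \<le> m"
    and nd: "\<not> (m - 1) dvd card V"
  shows "contains (V, all_pairs V - E) (T1 n) \<and> contains (V, all_pairs V - E) (T2 n)"
proof (cases "\<exists>v\<in>V. m - 1 \<le> card (nbr E v)")
  case True
  then show ?thesis using high_degree_case N nm m7 by auto
next
  case False
  then have md: "\<forall>v\<in>V. card (nbr E v) \<le> m - 2" by force
  obtain u where uW: "u \<in> rest" using rest_nonempty[OF nd] by blast
  have u: "u \<in> V" using uW by (simp add: rest_def)
  have du: "card (nbr E u) \<le> m - 3" using rest_degree[OF md uW] .
  show ?thesis
  proof (rule rest_vertex_case[OF md uW])
    assume "card (non_nbr V E u) < n - 2"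
    then have hu: "card (non_nbr V E u) = n - 3" "card (nbr E u) = m - 3"
      using card_non_nbr[OF s u] du N nm m7 by arith+
    have "(m - 3) * (m - 4) < (n - 3) * (m - 4)" using nm m7 by (intro mult_strict_right_mono) auto
    then show "2 \<le> card (nbr E u) \<and> m - 2 \<le> card (non_nbr V E u) \<and> n - 3 \<le> card (non_nbr V E u) \<and>
       card (nbr E u) * (m - 4) < card (non_nbr V E u) * (card (nbr E u) - 1)"
      using hu nm m7 by (simp add: mult.commute, linarith)
  qed (use N nm m7 in auto)
qed

(* For N = 2m - 5 with m even, the rest contains a vertex of degree <= m-4: otherwise the rest
   would be (m-3)-regular of odd degree, hence of even size, which the block sizes forbid. *)
lemma low_degree_rest_vertex:
  assumes md: "\<forall>v\<in>V. card (nbr E v) \<le> m - 2" and N: "card V = 2 * m - 5"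
    and m8: "8 \<le> m" and ev: "even m"
  obtains u where "u \<in> rest" "card (nbr E u) \<le> m - 4"
proof (rule ccontr)
  assume "\<not> thesis"
  then have reg: "\<forall>u\<in>rest. card (nbr E u) = m - 3" using that rest_degree[OF md] by force
  have "odd (m - 3)" using ev m8 by simp
  then have evW: "even (card rest)" using even_rest_regular[OF reg] by simp
  define k where "k = card (closed_nbr E ` centres)"
  have NV: "2 * m - 5 = (m - 1) * k + card rest" using card_covered_rest card_covered N k_def by simp
  consider "k = 0" | "k = 1" | "2 \<le> k" by linarith
  then show False
  proof cases
    case 1
    then show False using NV evW m8 by presburger
  next
    case 2
    then have cW: "card rest = m - 4" using NV m8 by simp
    then obtain u where uW: "u \<in> rest" using m8 by fastforce
    have "insert u (nbr E u) \<subseteq> rest" using rest_closed[OF uW] uW by blast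
    then have "card (insert u (nbr E u)) \<le> card rest" using fV by (intro card_mono) (auto simp: rest_def)
    moreover have "u \<notin> nbr E u" using nbr_in[OF s] by blast
    ultimately show False using finite_nbr[OF s] reg uW cW m8 by simp
  next
    case 3
    then have "(m - 1) * 2 \<le> (m - 1) * k" by simp
    then show False using NV m8 by linarith
  qed
qed

lemma upper_even:
  assumes N: "card V = 2 * m - 5" and nm: "n = m + 1" and m8: "8 \<le> m" and ev: "even m"
  shows "contains (V, all_pairs V - E) (T1 n) \<and> contains (V, all_pairs V - E) (T2 n)"
proof (cases "\<exists>v\<in>V. m - 1 \<le> card (nbr E v)")
  case True
  then show ?thesis using high_degree_case N nm m8 by auto
next
  case False
  then have md: "\<forall>v\<in>V. card (nbr E v) \<le> m - 2" by force
  obtain u where uW: "u \<in> rest" and du: "card (nbr E u) \<le> m - 4"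
    using low_degree_rest_vertex[OF md N m8 ev] .
  have u: "u \<in> V" using uW by (simp add: rest_def)
  show ?thesis
  proof (rule rest_vertex_case[OF md uW])
    assume "card (non_nbr V E u) < n - 2"
    then have hu: "card (non_nbr V E u) = m - 2" "card (nbr E u) = m - 4"
      using card_non_nbr[OF s u] du N nm m8 by arith+
    have "(m - 4) * (m - 4) < (m - 2) * (m - 5)"
    proof -
      obtain k where "m = k + 8" using m8 by (metis add.commute le_add_diff_inverse)
      then show ?thesis by (simp add: algebra_simps)
    qed
    then show "2 \<le> card (nbr E u) \<and> m - 2 \<le> card (non_nbr V E u) \<and> n - 3 \<le> card (non_nbr V E u) \<and>
       card (nbr E u) * (m - 4) < card (non_nbr V E u) * (card (nbr E u) - 1)"
      using hu nm m8 by (simp add: mult.commute)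
  qed (use N nm m8 in auto)
qed

end

(* The lower-bound graphs: on vertices 0..<M a circulant graph in which i, j are adjacent when
   their cyclic distance lies in circ_steps M d (the d/2 shortest steps in both directions,
   plus the antipodal step when d is odd); it is d-regular when d < M and d or M is even. *)
definition circ_steps :: "nat \<Rightarrow> nat \<Rightarrow> nat set" where
  "circ_steps M d = {s. 0 < s \<and> s < M \<and> (s \<le> d div 2 \<or> M - s \<le> d div 2 \<or> (odd d \<and> 2 * s = M))}"

definition circ_adj :: "nat \<Rightarrow> nat \<Rightarrow> nat \<Rightarrow> nat \<Rightarrow> bool" where
  "circ_adj M d i j = (nat ((int j - int i) mod int M) \<in> circ_steps M d)"

definition circ_clique :: "nat \<Rightarrow> nat \<Rightarrow> nat \<Rightarrow> nat set set" where
  "circ_clique M b d = {{i, j} | i j. i < M \<and> j < M \<and> circ_adj M d i j} \<union>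
               {{i, j} | i j. M \<le> i \<and> i < M + b \<and> M \<le> j \<and> j < M + b \<and> i \<noteq> j}"

lemma circ_steps_sym: "s \<in> circ_steps M d \<Longrightarrow> M - s \<in> circ_steps M d"
  unfolding circ_steps_def by auto

lemma circ_steps_range: "s \<in> circ_steps M d \<Longrightarrow> 0 < s \<and> s < M" unfolding circ_steps_def by auto

lemma circ_adj_irrefl: "\<not> circ_adj M d i i"
  unfolding circ_adj_def using circ_steps_range by fastforce

(* The step set is closed under s |-> M - s, so circulant adjacency is symmetric. *)
lemma circ_adj_sym:
  assumes "circ_adj M d i j" shows "circ_adj M d j i"
proof -
  define t where "t = (int j - int i) mod int M"
  have ts: "nat t \<in> circ_steps M d" using assms by (simp add: circ_adj_def t_def)
  then have tp: "0 < nat t" "nat t < M" using circ_steps_range by blast+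
  then have M0: "int M > 0" by simp
  have t0: "t \<noteq> 0" using tp by auto
  have tr: "0 \<le> t" "t < int M" using M0 by (simp_all add: t_def)
  have "(- (int j - int i)) mod int M = int M - t"
    using zmod_zminus1_eq_if[of "int j - int i" "int M"] t0 unfolding t_def by presburger
  then have "(int i - int j) mod int M = int M - t" by simp
  then have "nat ((int i - int j) mod int M) = M - nat t" using tr by simp
  then show ?thesis using circ_steps_sym[OF ts] by (simp add: circ_adj_def)
qed

lemma circ_clique_iff: "{x, y} \<in> circ_clique M b d \<longleftrightarrow> (x < M \<and> y < M \<and> circ_adj M d x y) \<or>
    (M \<le> x \<and> x < M + b \<and> M \<le> y \<and> y < M + b \<and> x \<noteq> y)"
  unfolding circ_clique_def using circ_adj_sym by (auto simp: doubleton_eq_iff)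

lemma circ_clique_simple: "simple_graph ({0..<M + b}, circ_clique M b d)"
  unfolding simple_graph_def
proof (intro conjI)
  show "finite (fst ({0..<M + b}, circ_clique M b d))" by simp
  show "snd ({0..<M + b}, circ_clique M b d) \<subseteq> all_pairs (fst ({0..<M + b}, circ_clique M b d))"
  proof
    fix e assume "e \<in> snd ({0..<M + b}, circ_clique M b d)"
    then show "e \<in> all_pairs (fst ({0..<M + b}, circ_clique M b d))"
      unfolding circ_clique_def all_pairs_def using circ_adj_irrefl by auto (metis add.commute trans_less_add2)
  qed
qed

lemma nbr_circ: "x < M \<Longrightarrow> nbr (circ_clique M b d) x = {y. y < M \<and> circ_adj M d x y}"
  unfolding nbr_def circ_clique_iff by auto

lemma nbr_clique: "M \<le> x \<Longrightarrow> x < M + b \<Longrightarrow> nbr (circ_clique M b d) x = {M..<M + b} - {x}"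
  unfolding nbr_def circ_clique_iff by auto

(* y |-> (y - x) mod M maps the circulant neighbours of x bijectively onto the step set. *)
lemma card_circ_nbr:
  assumes x: "x < M"
  shows "card {y. y < M \<and> circ_adj M d x y} = card (circ_steps M d)"
proof -
  define phi where "phi y = nat ((int y - int x) mod int M)" for y
  have M0: "int M > 0" using x by simp
  have inj: "inj_on phi {y. y < M \<and> circ_adj M d x y}"
  proof (rule inj_onI)
    fix y y' assume y: "y \<in> {y. y < M \<and> circ_adj M d x y}" and y': "y' \<in> {y. y < M \<and> circ_adj M d x y}"
      and eq: "phi y = phi y'"
    have "(int y - int x) mod int M = (int y' - int x) mod int M"
      using eq M0 unfolding phi_def by (metis Euclidean_Rings.pos_mod_sign eq_nat_nat_iff)
    then have "int M dvd (int y - int x) - (int y' - int x)" by (simp add: mod_eq_dvd_iff)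
    then have "int M dvd int y - int y'" by simp
    then have "int y mod int M = int y' mod int M" by (simp add: mod_eq_dvd_iff)
    then show "y = y'" using y y' by simp
  qed
  have img: "phi ` {y. y < M \<and> circ_adj M d x y} = circ_steps M d"
  proof
    show "phi ` {y. y < M \<and> circ_adj M d x y} \<subseteq> circ_steps M d" by (auto simp: phi_def circ_adj_def)
    show "circ_steps M d \<subseteq> phi ` {y. y < M \<and> circ_adj M d x y}"
    proof
      fix s assume s: "s \<in> circ_steps M d"
      have sl: "s < M" using circ_steps_range[OF s] by simp
      define y where "y = (x + s) mod M"
      have yl: "y < M" using M0 by (simp add: y_def)
      have "(int y - int x) mod int M = ((int x + int s) mod int M - int x) mod int M"
        by (simp add: y_def zmod_int)
      also have "\<dots> = int s mod int M" by (simp add: mod_diff_left_eq)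
      also have "\<dots> = int s" using sl by simp
      finally have py: "phi y = s" by (simp add: phi_def)
      then have "circ_adj M d x y" using s by (simp add: circ_adj_def phi_def)
      then show "s \<in> phi ` {y. y < M \<and> circ_adj M d x y}" using yl py by force
    qed
  qed
  show ?thesis using card_image[OF inj] img by simp
qed

(* The step set has d elements: d div 2 short steps each way, plus M/2 when d is odd. *)
lemma card_circ_steps:
  assumes dM: "d < M" and par: "even d \<or> even M"
  shows "card (circ_steps M d) = d"
proof -
  define h where "h = d div 2"
  define X where "X = (if odd d then {M div 2} else {})"
  have hM: "2 * h < M" using dM by (simp add: h_def)
  have eq: "circ_steps M d = ({1..h} \<union> {M - h..<M}) \<union> X"
  proof (cases "odd d")
    case True
    then have "even M" using par by simp
    then show ?thesis using True hM unfolding circ_steps_def X_def h_def by (auto elim!: evenE)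
  next
    case False
    then show ?thesis using hM unfolding circ_steps_def X_def h_def by auto
  qed
  have d1: "{1..h} \<inter> {M - h..<M} = {}" using hM by auto
  have c1: "card ({1..h} \<union> {M - h..<M}) = h + h"
    using d1 hM by (subst card_Un_disjoint) auto
  show ?thesis
  proof (cases "odd d")
    case True
    then have "even M" using par by simp
    then have "M div 2 \<notin> {1..h} \<union> {M - h..<M}" using True hM dM
      by (auto simp: h_def elim!: evenE oddE)
    then have "card (circ_steps M d) = h + h + 1" using eq c1 True by (simp add: X_def)
    then show ?thesis using True by (simp add: h_def) presburger
  next
    case False
    then show ?thesis using eq c1 by (simp add: X_def h_def) presburger
  qed
qed

lemma card_nbr_circ:
  "x < M \<Longrightarrow> d < M \<Longrightarrow> even d \<or> even M \<Longrightarrow> card (nbr (circ_clique M b d) x) = d"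
  using nbr_circ card_circ_nbr card_circ_steps by simp

lemma card_nbr_clique: "M \<le> x \<Longrightarrow> x < M + b \<Longrightarrow> card (nbr (circ_clique M b d) x) = b - 1"
  using nbr_clique by simp

lemma circ_clique_no_Tprime:
  assumes m: "m \<ge> 4" and dM: "m - 3 < M" and par: "even (m - 3) \<or> even M"
    and b: "b = 0 \<or> b = m - 1"
  shows "\<not> contains ({0..<M + b}, circ_clique M b (m - 3)) (Tprime m)"
proof (rule no_Tprime[OF circ_clique_simple m], intro ballI)
  fix v assume v: "v \<in> {0..<M + b}"
  let ?E = "circ_clique M b (m - 3)"
  show "card (nbr ?E v) \<le> m - 3 \<or>
      (card (nbr ?E v) = m - 2 \<and> (\<forall>x\<in>nbr ?E v. nbr ?E x \<subseteq> insert v (nbr ?E v)))"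
  proof (cases "v < M")
    case True then show ?thesis using card_nbr_circ[OF _ dM par] by simp
  next
    case False
    then have vb: "M \<le> v" "v < M + b" using v by auto
    then have "b = m - 1" using b by auto
    moreover have "\<forall>x\<in>nbr ?E v. nbr ?E x \<subseteq> insert v (nbr ?E v)"
    proof
      fix x assume "x \<in> nbr ?E v"
      then have x: "M \<le> x" "x < M + b" using nbr_clique[OF vb] by auto
      show "nbr ?E x \<subseteq> insert v (nbr ?E v)" using nbr_clique[OF x] nbr_clique[OF vb] by auto
    qed
    ultimately show ?thesis using card_nbr_clique[OF vb] by (simp add: numeral_2_eq_2)
  qed
qed

lemma circ_clique_no_Tj:
  assumes n: "n \<ge> 4" and dM: "d < M" and par: "even d \<or> even M"
    and hc: "M + b - 1 - d \<le> n - 4" and hM: "b > 0 \<Longrightarrow> M \<le> n - 4"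
  shows "\<not> contains (complement ({0..<M + b}, circ_clique M b d)) (Tj j n)"
  unfolding complement_def fst_conv snd_conv
proof (rule no_Tj[OF circ_clique_simple n], intro ballI)
  fix v assume v: "v \<in> {0..<M + b}"
  have deg: "card (non_nbr {0..<M + b} (circ_clique M b d) v) = M + b - 1 - card (nbr (circ_clique M b d) v)"
    using card_non_nbr[OF circ_clique_simple v] by simp
  show "card (non_nbr {0..<M + b} (circ_clique M b d) v) \<le> n - 4"
  proof (cases "v < M")
    case True then show ?thesis using deg card_nbr_circ[OF True dM par] hc by simp
  next
    case False
    then have vb: "M \<le> v" "v < M + b" using v by auto
    then show ?thesis using deg card_nbr_clique[OF vb] hM by simp
  qed
qed

(* The Ramsey property at N: every graph on {0..<N} contains G1 or has G2 in its complement.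
   It is monotone in N, so r(G1, G2) = K as soon as it holds at K and fails at K - 1. *)
definition ramsey_prop :: "graph \<Rightarrow> graph \<Rightarrow> nat \<Rightarrow> bool" where
  "ramsey_prop G1 G2 N = (\<forall>E. simple_graph ({0..<N}, E) \<longrightarrow>
          contains ({0..<N}, E) G1 \<or> contains (complement ({0..<N}, E)) G2)"

lemma contains_mono:
  assumes "contains (V, E) X" "V \<subseteq> V'" "E \<subseteq> E'"
  shows "contains (V', E') X"
  using assms unfolding contains_def by (auto 0 3)

lemma ramsey_prop_mono:
  assumes P: "ramsey_prop G1 G2 N" and NN: "N \<le> N'"
  shows "ramsey_prop G1 G2 N'"
  unfolding ramsey_prop_def
proof (intro allI impI)
  fix E' assume s': "simple_graph ({0..<N'}, E')"
  define E where "E = E' \<inter> all_pairs {0..<N}"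
  have s: "simple_graph ({0..<N}, E)" by (simp add: simple_graph_def E_def)
  have VV: "{0..<N} \<subseteq> {0..<N'}" using NN by auto
  have "contains ({0..<N}, E) G1 \<or> contains (complement ({0..<N}, E)) G2"
    using P s unfolding ramsey_prop_def by blast
  then show "contains ({0..<N'}, E') G1 \<or> contains (complement ({0..<N'}, E')) G2"
  proof
    assume "contains ({0..<N}, E) G1"
    then show ?thesis using contains_mono[OF _ VV] by (metis E_def inf_le1)
  next
    assume "contains (complement ({0..<N}, E)) G2"
    then have c: "contains ({0..<N}, all_pairs {0..<N} - E) G2" by (simp add: complement_def)
    have "all_pairs {0..<N} - E \<subseteq> all_pairs {0..<N'} - E'"
      using all_pairs_mono[OF VV] by (auto simp: E_def)
    then have "contains ({0..<N'}, all_pairs {0..<N'} - E') G2" using contains_mono[OF c VV] by blast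
    then show ?thesis by (simp add: complement_def)
  qed
qed

lemma ramsey_eqI:
  assumes K: "K > 0" and up: "ramsey_prop G1 G2 K"
    and low: "simple_graph ({0..<K - 1}, E) \<and> \<not> contains ({0..<K - 1}, E) G1
              \<and> \<not> contains (complement ({0..<K - 1}, E)) G2"
  shows "ramsey G1 G2 = K"
proof -
  have nl: "\<not> ramsey_prop G1 G2 (K - 1)" using low unfolding ramsey_prop_def by blast
  show ?thesis unfolding ramsey_def
  proof (rule Least_equality)
    show "0 < K \<and> (\<forall>E. simple_graph ({0..<K}, E) \<longrightarrow>
          contains ({0..<K}, E) G1 \<or> contains (complement ({0..<K}, E)) G2)"
      using K up by (simp add: ramsey_prop_def)
    fix y assume "0 < y \<and> (\<forall>E. simple_graph ({0..<y}, E) \<longrightarrow>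
          contains ({0..<y}, E) G1 \<or> contains (complement ({0..<y}, E)) G2)"
    then have "ramsey_prop G1 G2 y" by (simp add: ramsey_prop_def)
    show "K \<le> y"
    proof (rule ccontr)
      assume "\<not> K \<le> y"
      then have "y \<le> K - 1" by simp
      then have "ramsey_prop G1 G2 (K - 1)" using ramsey_prop_mono \<open>ramsey_prop G1 G2 y\<close> by blast
      then show False using nl by simp
    qed
  qed
qed

lemma ramsey_prop_from_upper:
  assumes m: "m \<ge> 4"
    and up: "\<And>E. Tprime_free {0..<N} E m \<Longrightarrow>
        contains ({0..<N}, all_pairs {0..<N} - E) (T1 n) \<and> contains ({0..<N}, all_pairs {0..<N} - E) (T2 n)"
  shows "ramsey_prop (Tprime m) (Tj j n) N"
  unfolding ramsey_prop_def
proof (intro allI impI)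
  fix E assume s: "simple_graph ({0..<N}, E)"
  show "contains ({0..<N}, E) (Tprime m) \<or> contains (complement ({0..<N}, E)) (Tj j n)"
  proof (cases "contains ({0..<N}, E) (Tprime m)")
    case False
    then have "Tprime_free {0..<N} E m" using s m by (simp add: Tprime_free_def)
    then show ?thesis using up by (simp add: complement_def Tj_def)
  qed simp
qed

lemma ramsey_eq_from_bounds:
  assumes K: "K > 0" and up: "ramsey_prop (Tprime m) (Tj j n) K" and KM: "K - 1 = M + b"
    and m: "m \<ge> 4" and n: "n \<ge> 4" and dM: "m - 3 < M" and par: "even (m - 3) \<or> even M"
    and b: "b = 0 \<or> b = m - 1" and hc: "M + b - 1 - (m - 3) \<le> n - 4" and hM: "b > 0 \<Longrightarrow> M \<le> n - 4"
  shows "ramsey (Tprime m) (Tj j n) = K"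
  using circ_clique_simple circ_clique_no_Tprime[OF m dM par b] circ_clique_no_Tj[OF n dM par hc hM] KM
  by (intro ramsey_eqI[OF K up, of "circ_clique M b (m - 3)"]) simp

(* Odd m >= 9: the upper bound at 2m - 4 = m + (m+1) - 5, the circulant on 2m - 5 vertices. *)
lemma ramsey_odd:
  assumes "odd m" "m \<ge> 9"
  shows "ramsey (Tprime m) (Tj j (m + 1)) = 2 * m - 4"
proof (rule ramsey_eq_from_bounds[where M = "2 * m - 5" and b = 0])
  show "ramsey_prop (Tprime m) (Tj j (m + 1)) (2 * m - 4)"
  proof (rule ramsey_prop_from_upper)
    fix E assume free: "Tprime_free {0..<2 * m - 4} E m"
    have "\<not> (m - 1) dvd (2 * m - 4)"
    proof
      assume "(m - 1) dvd (2 * m - 4)"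
      then have "(m - 1) dvd (2 * m - 4 - (m - 1))" by (rule dvd_diff_nat) simp
      moreover have "2 * m - 4 - (m - 1) = m - 3" using assms by simp
      ultimately have "m - 1 \<le> m - 3" using assms by (intro dvd_imp_le) auto
      then show False using assms by simp
    qed
    then have nd: "\<not> (m - 1) dvd card {0..<2 * m - 4}" by simp
    have N: "card {0..<2 * m - 4} = m + (m + 1) - 5" using assms by simp
    show "contains ({0..<2 * m - 4}, all_pairs {0..<2 * m - 4} - E) (T1 (m + 1)) \<and>
       contains ({0..<2 * m - 4}, all_pairs {0..<2 * m - 4} - E) (T2 (m + 1))"
      using Tprime_free.upper_nondivisible[OF free N _ _ nd] assms by simp
  qed (use assms in simp)
qed (use assms in auto)

(* Even m >= 16: the upper bound at 2m - 5, the circulant on 2m - 6 vertices. *)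
lemma ramsey_even:
  assumes "even m" "m \<ge> 16"
  shows "ramsey (Tprime m) (Tj j (m + 1)) = 2 * m - 5"
proof (rule ramsey_eq_from_bounds[where M = "2 * m - 6" and b = 0])
  show "ramsey_prop (Tprime m) (Tj j (m + 1)) (2 * m - 5)"
  proof (rule ramsey_prop_from_upper)
    fix E assume "Tprime_free {0..<2 * m - 5} E m"
    then show "contains ({0..<2 * m - 5}, all_pairs {0..<2 * m - 5} - E) (T1 (m + 1)) \<and>
       contains ({0..<2 * m - 5}, all_pairs {0..<2 * m - 5} - E) (T2 (m + 1))"
      using Tprime_free.upper_even[of "{0..<2 * m - 5}" E m "m + 1"] assms by simp
  qed (use assms in simp)
qed (use assms in auto)

(* General n >= m + 2 with m - 1 not dividing n - 4: the lower bound is the circulant on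
   m + n - 6 vertices, or, if its degree m - 3 and its size are both odd, a circulant on
   n - 5 vertices together with K_{m-1}. *)
lemma ramsey_nondivisible:
  assumes m7: "m \<ge> 7" and nm: "n \<ge> m + 2" and nd: "\<not> (m - 1) dvd (n - 4)"
  shows "ramsey (Tprime m) (Tj j n) = m + n - 5"
proof -
  have up: "ramsey_prop (Tprime m) (Tj j n) (m + n - 5)"
  proof (rule ramsey_prop_from_upper)
    fix E assume free: "Tprime_free {0..<m + n - 5} E m"
    have "\<not> (m - 1) dvd (m + n - 5)"
    proof
      assume "(m - 1) dvd (m + n - 5)"
      then have "(m - 1) dvd (m + n - 5 - (m - 1))" by (rule dvd_diff_nat) simp
      moreover have "m + n - 5 - (m - 1) = n - 4" using m7 nm by simp
      ultimately show False using nd by simp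
    qed
    then show "contains ({0..<m + n - 5}, all_pairs {0..<m + n - 5} - E) (T1 n) \<and>
       contains ({0..<m + n - 5}, all_pairs {0..<m + n - 5} - E) (T2 n)"
      using Tprime_free.upper_nondivisible[OF free] m7 nm by simp
  qed (use m7 in simp)
  show ?thesis
  proof (cases "even (m - 3) \<or> even (m + n - 6)")
    case True
    show ?thesis
      by (rule ramsey_eq_from_bounds[where M = "m + n - 6" and b = 0, OF _ up]) (use True m7 nm in auto)
  next
    case False
    then have "even (n - 5)" "n \<noteq> m + 2" using m7 nm by auto
    then show ?thesis
      by (intro ramsey_eq_from_bounds[where M = "n - 5" and b = "m - 1", OF _ up]) (use m7 nm in auto)
  qed
qed

theorem theorem6p3:
  fixes m n j :: nat
  assumes "j \<in> {1, 2}"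
  shows "(odd m \<and> m \<ge> 9 \<longrightarrow> ramsey (Tprime m) (Tj j (m + 1)) = 2 * m - 4)
       \<and> (even m \<and> m \<ge> 16 \<longrightarrow> ramsey (Tprime m) (Tj j (m + 1)) = 2 * m - 5)
       \<and> (m \<ge> 7 \<and> n \<ge> max (m + 2) (19 - m) \<and> \<not> (m - 1) dvd (n - 4)
            \<longrightarrow> ramsey (Tprime m) (Tj j n) = m + n - 5)"
  using ramsey_odd ramsey_even ramsey_nondivisible by auto

end
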